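(* Any pairwise trivially balanced lobster has a complete $\alpha$-labeling.
   Context: For a graph $G=(V,E)$ with $m$ edges, an $\alpha$-labeling with critical number $k$ is an injective $f:V\to\{0,\ldots,m\}$ with distinct edge labels $|f(u)-f(v)|$ such that every edge $uv$ satisfies $f(u)\le k<f(v)$ or $f(v)\le k<f(u)$; it is complete if $f$ is bijective. A lobster is a tree whose base (delete all degree-one vertices) is a caterpillar (a tree whose base is a path). A lobster $L$ is described by a spine, a path $(v_1,\ldots,v_r)$, and lobes $F_i$ at $v_i$ (pairwise vertex-disjoint trees meeting the spine only in $v_i$, $L$ the union of spine and lobes), each lobe $F_i$ consisting of $v_i$, vertices adjacent to $v_i$, and further leaves attached to those vertices; a neighbour of $v_i$ in $F_i$ with no further leaves is a pendant vertex at $v_i$, and a neighbour $u$ of $v_i$ together with its $\ge1$ further leaves is a non-pendant branch. $L$ is pairwise trivially balanced if $r$ is even and, for each odd $i\in\{1,\ldots,r-1\}$, there are integers $q_i\ge 0$ and $t_i\ge1$ such that each of $F_i$ and $F_{i+1}$ has exactly $q_i$ non-pendant branches, each consisting of a neighbour of the spinal vertex together with exactly $t_i$ further leaves (the numbers of pendant vertices at $v_i$ and $v_{i+1}$ being arbitrary). *)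

theory Defs
  imports Main
begin

definition simple_graph :: "'a set \<Rightarrow> 'a set set \<Rightarrow> bool" where
  "simple_graph V E \<longleftrightarrow> finite V \<and> (\<forall>e\<in>E. e \<subseteq> V \<and> card e = 2)"

definition adj_rel :: "'a set set \<Rightarrow> ('a \<times> 'a) set" where
  "adj_rel E = {(x, y). {x, y} \<in> E}"

definition connected_graph :: "'a set \<Rightarrow> 'a set set \<Rightarrow> bool" where
  "connected_graph V E \<longleftrightarrow> (\<forall>x\<in>V. \<forall>y\<in>V. (x, y) \<in> (adj_rel E)\<^sup>*)"

definition is_tree :: "'a set \<Rightarrow> 'a set set \<Rightarrow> bool" where
  "is_tree V E \<longleftrightarrow> simple_graph V E \<and> V \<noteq> {} \<and> connected_graph V E \<and> card E = card V - 1"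

definition alpha_labeling :: "'a set \<Rightarrow> 'a set set \<Rightarrow> ('a \<Rightarrow> nat) \<Rightarrow> nat \<Rightarrow> bool" where
  "alpha_labeling V E f k \<longleftrightarrow>
     inj_on f V \<and> f ` V \<subseteq> {0..card E} \<and>
     (\<forall>x y x' y'. {x, y} \<in> E \<longrightarrow> {x', y'} \<in> E \<longrightarrow>
        \<bar>int (f x) - int (f y)\<bar> = \<bar>int (f x') - int (f y')\<bar> \<longrightarrow> {x, y} = {x', y'}) \<and>
     (\<forall>x y. {x, y} \<in> E \<longrightarrow> (f x \<le> k \<and> k < f y) \<or> (f y \<le> k \<and> k < f x))"

definition complete_alpha_labeling :: "'a set \<Rightarrow> 'a set set \<Rightarrow> ('a \<Rightarrow> nat) \<Rightarrow> nat \<Rightarrow> bool" where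
  "complete_alpha_labeling V E f k \<longleftrightarrow> alpha_labeling V E f k \<and> bij_betw f V {0..card E}"

definition lobe_nbrs :: "'a set set \<Rightarrow> (nat \<Rightarrow> 'a) \<Rightarrow> (nat \<Rightarrow> 'a set) \<Rightarrow> nat \<Rightarrow> 'a set" where
  "lobe_nbrs E v F i = {u \<in> F i. {v i, u} \<in> E}"

definition lobe_leaves :: "'a set set \<Rightarrow> (nat \<Rightarrow> 'a) \<Rightarrow> (nat \<Rightarrow> 'a set) \<Rightarrow> nat \<Rightarrow> 'a \<Rightarrow> 'a set" where
  "lobe_leaves E v F i u = {w \<in> F i. {u, w} \<in> E \<and> w \<noteq> v i}"

text \<open>Non-pendant branches at v i (identified by their neighbour u of v i).\<close>
definition nonpendant :: "'a set set \<Rightarrow> (nat \<Rightarrow> 'a) \<Rightarrow> (nat \<Rightarrow> 'a set) \<Rightarrow> nat \<Rightarrow> 'a set" where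
  "nonpendant E v F i = {u \<in> lobe_nbrs E v F i. lobe_leaves E v F i u \<noteq> {}}"

definition lobster_description ::
  "'a set \<Rightarrow> 'a set set \<Rightarrow> nat \<Rightarrow> (nat \<Rightarrow> 'a) \<Rightarrow> (nat \<Rightarrow> 'a set) \<Rightarrow> bool" where
  "lobster_description V E r v F \<longleftrightarrow>
     is_tree V E \<and>
     inj_on v {1..r} \<and>
     (\<forall>i\<in>{1..<r}. {v i, v (Suc i)} \<in> E) \<and>
     (\<forall>i\<in>{1..r}. v i \<in> F i \<and> F i \<inter> v ` {1..r} = {v i}) \<and>
     (\<forall>i\<in>{1..r}. \<forall>j\<in>{1..r}. i \<noteq> j \<longrightarrow> F i \<inter> F j = {}) \<and>
     V = (\<Union>i\<in>{1..r}. F i) \<and>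
     E = {{v i, v (Suc i)} | i. 1 \<le> i \<and> i < r} \<union> (\<Union>i\<in>{1..r}. {e \<in> E. e \<subseteq> F i}) \<and>
     (\<forall>i\<in>{1..r}.
        (\<forall>e\<in>E. e \<subseteq> F i \<longrightarrow>
           (\<exists>u\<in>lobe_nbrs E v F i. e = {v i, u}) \<or>
           (\<exists>u\<in>lobe_nbrs E v F i. \<exists>w\<in>F i - ({v i} \<union> lobe_nbrs E v F i). e = {u, w})) \<and>
        (\<forall>w\<in>F i - ({v i} \<union> lobe_nbrs E v F i). \<exists>u\<in>lobe_nbrs E v F i. {u, w} \<in> E))"

definition pairwise_trivially_balanced ::
  "'a set set \<Rightarrow> nat \<Rightarrow> (nat \<Rightarrow> 'a) \<Rightarrow> (nat \<Rightarrow> 'a set) \<Rightarrow> bool" where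
  "pairwise_trivially_balanced E r v F \<longleftrightarrow>
     even r \<and>
     (\<forall>i\<in>{1..<r}. odd i \<longrightarrow>
        (\<exists>q t::nat. t \<ge> 1 \<and>
           card (nonpendant E v F i) = q \<and> card (nonpendant E v F (Suc i)) = q \<and>
           (\<forall>u\<in>nonpendant E v F i. card (lobe_leaves E v F i u) = t) \<and>
           (\<forall>u\<in>nonpendant E v F (Suc i). card (lobe_leaves E v F (Suc i) u) = t)))"

end

theory Submission
  imports Defs
begin

text \<open>For odd i, the lobes at v i and v (i+1) with their pendant vertices removed form a tree
  determined by q and t alone: two adjacent roots, each carrying q branches with t leaves. It has an
  explicit \<alpha>-labeling in which v i gets label 0 and v (i+1) the smallest label above the critical
  number. Pendant vertices at v i can then be added with new largest labels, and pendant vertices at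
  v (i+1) by inserting their labels just above the critical number. Consecutive pairs are finally
  joined along the spine edge between v (i-1) and v i by the standard concatenation of
  \<alpha>-labelings. The only property of trees needed is that an outer vertex of a lobe has a unique
  neighbour adjacent to the spine, which follows from the edge count |E| = |V| - 1.\<close>

section \<open>Oriented \<alpha>-labelings\<close>

text \<open>Every edge is recorded as the pair (end labelled at most k, end labelled above k), so that its
  label is the natural-number difference of the two labels.\<close>
definition oriented_alpha_labeling :: "'a set \<Rightarrow> ('a \<times> 'a) set \<Rightarrow> ('a \<Rightarrow> nat) \<Rightarrow> nat \<Rightarrow> bool" where
  "oriented_alpha_labeling V P f k \<longleftrightarrow>
     bij_betw f V {..<card V} \<and> k < card V \<and> P \<subseteq> V \<times> V \<and>
     (\<forall>(x, y)\<in>P. f x \<le> k \<and> k < f y) \<and> inj_on (\<lambda>(x, y). f y - f x) P"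

lemma oriented_alpha_labelingI:
  assumes "finite V" "inj_on f V" "\<And>x. x \<in> V \<Longrightarrow> f x < card V" "k < card V" "P \<subseteq> V \<times> V"
    "\<And>x y. (x, y) \<in> P \<Longrightarrow> f x \<le> k \<and> k < f y" "inj_on (\<lambda>(x, y). f y - f x) P"
  shows "oriented_alpha_labeling V P f k"
proof -
  have "f ` V = {..<card V}"
    using assms(1-3) by (intro card_subset_eq) (auto simp: card_image)
  with assms show ?thesis
    unfolding oriented_alpha_labeling_def bij_betw_def by auto
qed

lemma oriented_alpha_labelingD:
  assumes "oriented_alpha_labeling V P f k"
  shows "finite V" "inj_on f V" "\<And>x. x \<in> V \<Longrightarrow> f x < card V" "k < card V" "P \<subseteq> V \<times> V"
    "\<And>x y. (x, y) \<in> P \<Longrightarrow> f x \<le> k \<and> k < f y" "inj_on (\<lambda>(x, y). f y - f x) P"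
  using assms bij_betw_finite[of f V "{..<card V}"]
  unfolding oriented_alpha_labeling_def bij_betw_def by auto

lemma oriented_alpha_labeling_singleton: "oriented_alpha_labeling {z} {} (\<lambda>_. 0) 0"
  by (rule oriented_alpha_labelingI) auto

definition joined_label :: "('a \<Rightarrow> nat) \<Rightarrow> nat \<Rightarrow> ('a \<Rightarrow> nat) \<Rightarrow> 'a set \<Rightarrow> 'a \<Rightarrow> nat" where
  "joined_label f1 k1 f2 V2 x = (if x \<in> V2 then f2 x + k1 + 1 else if f1 x \<le> k1 then f1 x else f1 x + card V2)"

lemma joined_label_bij:
  assumes L1: "oriented_alpha_labeling V1 P1 f1 k1" and L2: "oriented_alpha_labeling V2 P2 f2 k2"
    and disj: "V1 \<inter> V2 = {}"
  shows "inj_on (joined_label f1 k1 f2 V2) (V1 \<union> V2)"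
    "x \<in> V1 \<union> V2 \<Longrightarrow> joined_label f1 k1 f2 V2 x < card (V1 \<union> V2)"
proof -
  note D1 = oriented_alpha_labelingD[OF L1] and D2 = oriented_alpha_labelingD[OF L2]
  let ?g = "joined_label f1 k1 f2 V2"
  have g1: "?g x = (if f1 x \<le> k1 then f1 x else f1 x + card V2)" if "x \<in> V1" for x
    using that disj unfolding joined_label_def by auto
  have g2: "?g x = f2 x + k1 + 1" if "x \<in> V2" for x
    using that unfolding joined_label_def by auto
  have range1: "?g x \<le> k1 \<or> k1 + card V2 < ?g x" if "x \<in> V1" for x
    using that g1 by auto
  have range2: "k1 < ?g x \<and> ?g x \<le> k1 + card V2" if "x \<in> V2" for x
    using that g2 D2(3) by fastforce
  show "inj_on ?g (V1 \<union> V2)"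
  proof (rule inj_onI)
    fix x y assume x: "x \<in> V1 \<union> V2" and y: "y \<in> V1 \<union> V2" and eq: "?g x = ?g y"
    consider "x \<in> V1" "y \<in> V1" | "x \<in> V2" "y \<in> V2" | "x \<in> V1" "y \<in> V2" | "x \<in> V2" "y \<in> V1"
      using x y by blast
    then show "x = y"
    proof cases
      case 1
      then have "f1 x = f1 y" using eq g1[of x] g1[of y] by (auto split: if_splits)
      with 1 show ?thesis using D1(2) by (simp add: inj_on_eq_iff)
    next
      case 2
      then show ?thesis using eq g2 D2(2) by (simp add: inj_on_eq_iff)
    qed (use eq range1 range2 in fastforce)+
  qed
  show "?g x < card (V1 \<union> V2)" if "x \<in> V1 \<union> V2"
  proof -
    have "card (V1 \<union> V2) = card V1 + card V2" using D1(1) D2(1) disj by (simp add: card_Un_disjoint)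
    then show ?thesis using that D1(3,4) D2(3)[of x] g1 g2 by (cases "x \<in> V1") auto
  qed
qed

lemma oriented_alpha_labeling_join:
  assumes L1: "oriented_alpha_labeling V1 P1 f1 k1" and a: "a \<in> V1" "f1 a = k1 + 1"
    and L2: "oriented_alpha_labeling V2 P2 f2 k2" and b: "b \<in> V2" "f2 b = 0"
    and disj: "V1 \<inter> V2 = {}"
  shows "oriented_alpha_labeling (V1 \<union> V2) (insert (b, a) (P1 \<union> P2)) (joined_label f1 k1 f2 V2) (k1 + k2 + 1)"
proof (rule oriented_alpha_labelingI)
  note D1 = oriented_alpha_labelingD[OF L1] and D2 = oriented_alpha_labelingD[OF L2]
  let ?g = "joined_label f1 k1 f2 V2"
  show "finite (V1 \<union> V2)" using D1(1) D2(1) by simp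
  show "inj_on ?g (V1 \<union> V2)" "\<And>x. x \<in> V1 \<union> V2 \<Longrightarrow> ?g x < card (V1 \<union> V2)"
    using joined_label_bij[OF L1 L2 disj] by blast+
  show "k1 + k2 + 1 < card (V1 \<union> V2)"
    using D1(1,3,4) D2(1,4) a disj by (simp add: card_Un_disjoint)
  show "insert (b, a) (P1 \<union> P2) \<subseteq> (V1 \<union> V2) \<times> (V1 \<union> V2)"
    using D1(5) D2(5) a b by auto
  have edge1: "?g x = f1 x \<and> ?g y = f1 y + card V2 \<and> f1 x \<le> k1 \<and> k1 < f1 y" if "(x, y) \<in> P1" for x y
    using that disj D1(5) D1(6)[OF that] unfolding joined_label_def by auto
  have edge2: "?g x = f2 x + k1 + 1 \<and> ?g y = f2 y + k1 + 1 \<and> f2 x \<le> k2 \<and> k2 < f2 y \<and> f2 y < card V2"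
    if "(x, y) \<in> P2" for x y
    using that D2(3,5) D2(6)[OF that] unfolding joined_label_def by auto
  have edge_ba: "?g b = k1 + 1" "?g a = k1 + 1 + card V2"
    using a b disj unfolding joined_label_def by auto
  show "?g x \<le> k1 + k2 + 1 \<and> k1 + k2 + 1 < ?g y" if "(x, y) \<in> insert (b, a) (P1 \<union> P2)" for x y
    using that edge1[of x y] edge2[of x y] edge_ba D2(4) by auto
  show "inj_on (\<lambda>(x, y). ?g y - ?g x) (insert (b, a) (P1 \<union> P2))"
  proof (rule inj_onI, clarify)
    fix x y x' y'
    assume p: "(x, y) \<in> insert (b, a) (P1 \<union> P2)" and p': "(x', y') \<in> insert (b, a) (P1 \<union> P2)"
      and eq: "?g y - ?g x = ?g y' - ?g x'"
    text \<open>Edges inside V1 get labels above card V2, those inside V2 labels below it,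
      and (b, a) gets card V2.\<close>
    have cls: "(x, y) \<in> P1 \<and> ?g y - ?g x = f1 y - f1 x + card V2 \<and> 0 < f1 y - f1 x
      \<or> (x, y) \<in> P2 \<and> ?g y - ?g x = f2 y - f2 x \<and> f2 y - f2 x < card V2
      \<or> (x, y) = (b, a) \<and> ?g y - ?g x = card V2" if "(x, y) \<in> insert (b, a) (P1 \<union> P2)" for x y
      using that edge1[of x y] edge2[of x y] edge_ba by auto
    from cls[OF p] cls[OF p'] eq D1(7) D2(7) show "x = x' \<and> y = y'"
      unfolding inj_on_def by (elim disjE) auto
  qed
qed

lemma oriented_alpha_labeling_add_leaf_at_bottom:
  assumes L: "oriented_alpha_labeling V P f k" and w: "w \<in> V" "f w = 0" and z: "z \<notin> V"
  shows "oriented_alpha_labeling (insert z V) (insert (w, z) P) (f(z := card V)) k"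
proof (rule oriented_alpha_labelingI)
  note D = oriented_alpha_labelingD[OF L]
  have card: "card (insert z V) = card V + 1" using D(1) z by simp
  show "finite (insert z V)" using D(1) by simp
  have "inj_on (f(z := card V)) V" using D(2) z by (simp add: inj_on_def)
  moreover have "card V \<notin> f ` V" using D(3) by (metis imageE less_irrefl)
  ultimately show "inj_on (f(z := card V)) (insert z V)" using z by (simp add: inj_on_insert) blast
  show "(f(z := card V)) x < card (insert z V)" if "x \<in> insert z V" for x
    using that D(3)[of x] z card by (cases "x = z") auto
  show "k < card (insert z V)" using D(4) card by simp
  show "insert (w, z) P \<subseteq> insert z V \<times> insert z V" using D(5) w by auto
  have old: "(f(z := card V)) x = f x" "(f(z := card V)) y = f y" "f y - f x < card V"
    if "(x, y) \<in> P" for x y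
    using that D(3,5) z by (auto dest: less_imp_diff_less)
  show "(f(z := card V)) x \<le> k \<and> k < (f(z := card V)) y" if "(x, y) \<in> insert (w, z) P" for x y
    using that old D(4,5,6) w z by auto
  text \<open>The new edge carries the label card V, larger than all old ones.\<close>
  have "inj_on (\<lambda>(x, y). (f(z := card V)) y - (f(z := card V)) x) P
    \<longleftrightarrow> inj_on (\<lambda>(x, y). f y - f x) P"
    by (rule inj_on_cong) (use D(5) z in auto)
  then have "inj_on (\<lambda>(x, y). (f(z := card V)) y - (f(z := card V)) x) P" using D(7) by simp
  moreover have "(f(z := card V)) z - (f(z := card V)) w = card V" using w z by auto
  ultimately show "inj_on (\<lambda>(x, y). (f(z := card V)) y - (f(z := card V)) x) (insert (w, z) P)"
    using old by force
qed

lemma oriented_alpha_labeling_add_leaf_at_threshold: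
  assumes L: "oriented_alpha_labeling V P f k" and w: "w \<in> V" "f w = k + 1" and z: "z \<notin> V"
  shows "oriented_alpha_labeling (insert z V) (insert (z, w) P)
    (\<lambda>x. if x = z then k + 1 else if f x \<le> k then f x else f x + 1) (k + 1)"
proof -
  text \<open>Attaching a leaf at the threshold is joining a one-vertex labeling.\<close>
  have "joined_label f k (\<lambda>_. 0) {z} = (\<lambda>x. if x = z then k + 1 else if f x \<le> k then f x else f x + 1)"
    unfolding joined_label_def by auto
  with oriented_alpha_labeling_join[OF L w oriented_alpha_labeling_singleton[of z], of z] z show ?thesis
    by (simp add: insert_commute)
qed

lemma oriented_alpha_labeling_add_leaves_at_bottom:
  assumes "finite S" "oriented_alpha_labeling V P f k" "w \<in> V" "f w = 0" "S \<inter> V = {}"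
  shows "\<exists>g. oriented_alpha_labeling (V \<union> S) (P \<union> Pair w ` S) g k \<and> (\<forall>x\<in>V. g x = f x)"
  using assms
proof (induction S arbitrary: V P f rule: finite_induct)
  case (insert z S)
  have z: "z \<notin> V" using insert.prems(4) by blast
  with insert.prems have "oriented_alpha_labeling (insert z V) (insert (w, z) P) (f(z := card V)) k"
    by (intro oriented_alpha_labeling_add_leaf_at_bottom) auto
  moreover have "(f(z := card V)) w = 0" using insert.prems z by auto
  moreover have "S \<inter> insert z V = {}" using insert.prems(4) insert.hyps(2) by blast
  ultimately obtain g
    where "oriented_alpha_labeling (insert z V \<union> S) (insert (w, z) P \<union> Pair w ` S) g k"
      and "\<forall>x\<in>insert z V. g x = (f(z := card V)) x"
    using insert.IH[of "insert z V" "insert (w, z) P" "f(z := card V)"] insert.prems(2) by blast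
  with z show ?case by (intro exI[of _ g]) auto
qed (simp; blast)

lemma oriented_alpha_labeling_add_leaves_at_threshold:
  assumes "finite S" "oriented_alpha_labeling V P f k" "w \<in> V" "f w = k + 1" "S \<inter> V = {}"
  shows "\<exists>g. oriented_alpha_labeling (V \<union> S) (P \<union> (\<lambda>z. (z, w)) ` S) g (k + card S) \<and>
    g w = k + card S + 1 \<and> (\<forall>x\<in>V. f x \<le> k \<longrightarrow> g x = f x)"
  using assms
proof (induction S arbitrary: V P f k rule: finite_induct)
  case (insert z S)
  define f' where "f' x = (if x = z then k + 1 else if f x \<le> k then f x else f x + 1)" for x
  have "z \<notin> V" using insert.prems(4) by blast
  with insert.prems have "oriented_alpha_labeling (insert z V) (insert (z, w) P) f' (k + 1)"
    unfolding f'_def by (intro oriented_alpha_labeling_add_leaf_at_threshold) auto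
  moreover have "f' w = k + 1 + 1" using insert.prems \<open>z \<notin> V\<close> by (auto simp: f'_def)
  moreover have "S \<inter> insert z V = {}" using insert.prems(4) insert.hyps(2) by blast
  ultimately obtain g
    where g: "oriented_alpha_labeling (insert z V \<union> S) (insert (z, w) P \<union> (\<lambda>z. (z, w)) ` S) g (k + 1 + card S)"
      "g w = k + 1 + card S + 1" "\<forall>x\<in>insert z V. f' x \<le> k + 1 \<longrightarrow> g x = f' x"
    using insert.IH[of "insert z V" "insert (z, w) P" f' "k + 1"] insert.prems(2) by blast
  have "insert z V \<union> S = V \<union> insert z S"
    "insert (z, w) P \<union> (\<lambda>z. (z, w)) ` S = P \<union> (\<lambda>z. (z, w)) ` insert z S"
    "k + card (insert z S) = k + 1 + card S"
    using insert.hyps by auto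
  moreover have "\<forall>x\<in>V. f x \<le> k \<longrightarrow> g x = f x"
    using g(3) \<open>z \<notin> V\<close> unfolding f'_def by fastforce
  ultimately show ?case using g(1,2) by (intro exI[of _ g]) simp
qed (simp; blast)

lemma oriented_alpha_labeling_image:
  assumes L: "oriented_alpha_labeling C P f k" and h: "inj_on h C"
  shows "oriented_alpha_labeling (h ` C) (map_prod h h ` P) (f \<circ> the_inv_into C h) k"
proof (rule oriented_alpha_labelingI)
  note D = oriented_alpha_labelingD[OF L]
  have inv: "the_inv_into C h (h x) = x" if "x \<in> C" for x using h that by (rule the_inv_into_f_f)
  show "finite (h ` C)" using D(1) by simp
  show "inj_on (f \<circ> the_inv_into C h) (h ` C)"
    using D(2) inv by (auto simp: inj_on_def)
  show "(f \<circ> the_inv_into C h) x < card (h ` C)" if "x \<in> h ` C" for x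
    using that D(3) inv card_image[OF h] by auto
  show "k < card (h ` C)" using D(4) card_image[OF h] by simp
  show "map_prod h h ` P \<subseteq> h ` C \<times> h ` C" using D(5) by auto
  show "(f \<circ> the_inv_into C h) x \<le> k \<and> k < (f \<circ> the_inv_into C h) y"
    if "(x, y) \<in> map_prod h h ` P" for x y
    using that D(5,6) inv by auto
  have "inj_on ((\<lambda>(x, y). (f \<circ> the_inv_into C h) y - (f \<circ> the_inv_into C h) x) \<circ> map_prod h h) P
    \<longleftrightarrow> inj_on (\<lambda>(x, y). f y - f x) P"
    by (rule inj_on_cong) (use D(5) inv in auto)
  then show "inj_on (\<lambda>(x, y). (f \<circ> the_inv_into C h) y - (f \<circ> the_inv_into C h) x) (map_prod h h ` P)"
    using D(7) by (blast intro: inj_on_imageI)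
qed

definition undirected :: "('a \<times> 'a) set \<Rightarrow> 'a set set" where
  "undirected P = (\<lambda>(x, y). {x, y}) ` P"

lemma undirected_insert [simp]: "undirected (insert (x, y) P) = insert {x, y} (undirected P)"
  unfolding undirected_def by simp

lemma undirected_Un [simp]: "undirected (P \<union> Q) = undirected P \<union> undirected Q"
  unfolding undirected_def by (rule image_Un)

lemma complete_alpha_labeling_if_oriented:
  assumes L: "oriented_alpha_labeling V P f k" and E: "E \<subseteq> undirected P" and card: "card E + 1 = card V"
  shows "complete_alpha_labeling V E f k"
proof -
  note D = oriented_alpha_labelingD[OF L]
  have oriented: "\<exists>a b. (a, b) \<in> P \<and> ((x, y) = (a, b) \<or> (x, y) = (b, a))" if "{x, y} \<in> E" for x y
  proof -
    from that E obtain a b where "(a, b) \<in> P" "{x, y} = {a, b}" unfolding undirected_def by auto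
    then show ?thesis by (auto simp: doubleton_eq_iff)
  qed
  have dist: "\<bar>int (f x) - int (f y)\<bar> = int (f b - f a)"
    if "(a, b) \<in> P" "(x, y) = (a, b) \<or> (x, y) = (b, a)" for x y a b
    using that D(6) by fastforce
  have bij: "bij_betw f V {0..card E}"
    using L card unfolding oriented_alpha_labeling_def by (simp add: atLeast0AtMost lessThan_Suc_atMost[symmetric])
  have "alpha_labeling V E f k"
    unfolding alpha_labeling_def
  proof (intro conjI allI impI)
    show "inj_on f V" "f ` V \<subseteq> {0..card E}" using bij by (auto simp: bij_betw_def)
  next
    fix x y x' y'
    assume xy: "{x, y} \<in> E" and xy': "{x', y'} \<in> E"
      and eq: "\<bar>int (f x) - int (f y)\<bar> = \<bar>int (f x') - int (f y')\<bar>"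
    obtain a b where ab: "(a, b) \<in> P" "(x, y) = (a, b) \<or> (x, y) = (b, a)"
      using oriented[OF xy] by blast
    obtain a' b' where ab': "(a', b') \<in> P" "(x', y') = (a', b') \<or> (x', y') = (b', a')"
      using oriented[OF xy'] by blast
    have "f b - f a = f b' - f a'" using eq dist[OF ab] dist[OF ab'] by simp
    then have "(a, b) = (a', b')" using inj_on_eq_iff[OF D(7) ab(1) ab'(1)] by simp
    with ab(2) ab'(2) show "{x, y} = {x', y'}" by auto
  next
    fix x y assume "{x, y} \<in> E"
    with oriented D(6) show "f x \<le> k \<and> k < f y \<or> f y \<le> k \<and> k < f x" by fastforce
  qed
  with bij show ?thesis unfolding complete_alpha_labeling_def by blast
qed

section \<open>The tree of a balanced pair of lobes\<close>

lemma mult_add_eq_imp_eq: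
  fixes c c' m s s' :: nat
  assumes "c * m + s = c' * m + s'" "0 < s" "s \<le> m" "0 < s'" "s' \<le> m"
  shows "c = c' \<and> s = s'"
proof -
  obtain s0 s0' where "s = Suc s0" "s' = Suc s0'" using assms(2,4) by (metis gr0_implies_Suc)
  with assms have eq: "c * m + s0 = c' * m + s0'" and "s0 < m" "s0' < m" by auto
  have "(c * m + s0) div m = c" "(c' * m + s0') div m = c'" using \<open>s0 < m\<close> \<open>s0' < m\<close> by simp_all
  with eq have "c = c'" by metis
  with assms(1) show ?thesis by simp
qed

text \<open>The roots X and Y are adjacent; XC a and YC a (a < q) are their children, and XL a j and
  YL a j (j < t) the leaves on XC a and YC a.\<close>
datatype twin_vertex = X | Y | XC nat | XL nat nat | YC nat | YL nat nat

definition twin_vertices :: "nat \<Rightarrow> nat \<Rightarrow> twin_vertex set" where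
  "twin_vertices q t = {X, Y} \<union> XC ` {..<q} \<union> YC ` {..<q}
     \<union> case_prod XL ` ({..<q} \<times> {..<t}) \<union> case_prod YL ` ({..<q} \<times> {..<t})"

definition twin_edges :: "nat \<Rightarrow> nat \<Rightarrow> (twin_vertex \<times> twin_vertex) set" where
  "twin_edges q t = {(X, Y)} \<union> (\<lambda>a. (X, XC a)) ` {..<q} \<union> (\<lambda>a. (YC a, Y)) ` {..<q}
     \<union> (\<lambda>(a, j). (XL a j, XC a)) ` ({..<q} \<times> {..<t}) \<union> (\<lambda>(a, j). (YC a, YL a j)) ` ({..<q} \<times> {..<t})"

text \<open>Every label other than that of X, and every edge label, is written as c (t + 1) + s with
  1 \<le> s \<le> t + 1; the pairs (c, s) are pairwise distinct, which makes both labelings injective.\<close>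
fun twin_key :: "nat \<Rightarrow> nat \<Rightarrow> twin_vertex \<Rightarrow> nat \<times> nat" where
  "twin_key q t X = (0, 0)"
| "twin_key q t Y = (q, 1)"
| "twin_key q t (XC a) = (q + a + 1, 1)"
| "twin_key q t (XL a j) = (q - a - 1, j + 1)"
| "twin_key q t (YC a) = (q - a - 1, t + 1)"
| "twin_key q t (YL a j) = (q + a, j + 2)"

definition twin_label :: "nat \<Rightarrow> nat \<Rightarrow> twin_vertex \<Rightarrow> nat" where
  "twin_label q t u = fst (twin_key q t u) * (t + 1) + snd (twin_key q t u)"

fun twin_edge_key :: "nat \<Rightarrow> nat \<Rightarrow> twin_vertex \<times> twin_vertex \<Rightarrow> nat \<times> nat" where
  "twin_edge_key q t (X, Y) = (q, 1)"
| "twin_edge_key q t (X, XC a) = (q + a + 1, 1)"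
| "twin_edge_key q t (XL a j, XC b) = (2 * a + 1, t + 1 - j)"
| "twin_edge_key q t (YC a, Y) = (a, 1)"
| "twin_edge_key q t (YC a, YL b j) = (2 * a, j + 2)"
| "twin_edge_key q t _ = (0, 0)"

lemma card_twin_vertices: "card (twin_vertices q t) = 2 * q * (t + 1) + 2"
proof -
  have inj: "inj_on XC A" "inj_on YC A" "inj_on (case_prod XL) B" "inj_on (case_prod YL) B" for A B
    by (auto simp: inj_on_def)
  have "card (twin_vertices q t) = 2 + q + q + q * t + q * t"
    unfolding twin_vertices_def
    by (subst card_Un_disjoint, fastforce, fastforce, fastforce)+
      (simp add: card_image[OF inj(1)] card_image[OF inj(2)] card_image[OF inj(3)]
        card_image[OF inj(4)] card_cartesian_product)
  then show ?thesis by (simp add: algebra_simps)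
qed

lemma twin_key_snd_bounds:
  "u \<in> twin_vertices q t \<Longrightarrow> u \<noteq> X \<Longrightarrow> 0 < snd (twin_key q t u) \<and> snd (twin_key q t u) \<le> t + 1"
  unfolding twin_vertices_def by auto

lemma inj_on_twin_key: "inj_on (twin_key q t) (twin_vertices q t)"
  unfolding twin_vertices_def inj_on_def by auto

lemma inj_on_twin_label: "inj_on (twin_label q t) (twin_vertices q t)"
proof (rule inj_onI)
  fix u u' assume u: "u \<in> twin_vertices q t" and u': "u' \<in> twin_vertices q t"
    and eq: "twin_label q t u = twin_label q t u'"
  have pos: "0 < twin_label q t w" if "w \<in> twin_vertices q t" "w \<noteq> X" for w
    using twin_key_snd_bounds[OF that] by (simp add: twin_label_def)
  have zero: "twin_label q t X = 0" by (simp add: twin_label_def)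
  show "u = u'"
  proof (cases "u = X \<or> u' = X")
    case True
    then show ?thesis using eq pos[OF u] pos[OF u'] zero by (metis less_irrefl)
  next
    case False
    let ?c = "fst (twin_key q t u)" and ?s = "snd (twin_key q t u)"
      and ?c' = "fst (twin_key q t u')" and ?s' = "snd (twin_key q t u')"
    have "?c * (t + 1) + ?s = ?c' * (t + 1) + ?s'" using eq by (simp add: twin_label_def)
    then have "?c = ?c' \<and> ?s = ?s'"
      using twin_key_snd_bounds[OF u] twin_key_snd_bounds[OF u'] False
      by (intro mult_add_eq_imp_eq) auto
    then have "twin_key q t u = twin_key q t u'" by (simp add: prod_eq_iff)
    then show ?thesis using inj_onD[OF inj_on_twin_key _ u u'] by blast
  qed
qed

lemma twin_edge_vertices: "(x, y) \<in> twin_edges q t \<Longrightarrow> x \<in> twin_vertices q t \<and> y \<in> twin_vertices q t"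
  unfolding twin_edges_def twin_vertices_def by auto

lemma twin_edge_labels:
  assumes "(x, y) \<in> twin_edges q t"
  shows "twin_label q t x \<le> q * (t + 1) \<and> q * (t + 1) < twin_label q t y \<and>
    twin_label q t y - twin_label q t x
      = fst (twin_edge_key q t (x, y)) * (t + 1) + snd (twin_edge_key q t (x, y)) \<and>
    0 < snd (twin_edge_key q t (x, y)) \<and> snd (twin_edge_key q t (x, y)) \<le> t + 1"
proof -
  from assms consider (XY) "(x, y) = (X, Y)"
    | (XC) a where "(x, y) = (X, XC a)" "a < q"
    | (XL) a j where "(x, y) = (XL a j, XC a)" "a < q" "j < t"
    | (YC) a where "(x, y) = (YC a, Y)" "a < q"
    | (YL) a j where "(x, y) = (YC a, YL a j)" "a < q" "j < t"
    unfolding twin_edges_def by auto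
  then show ?thesis
  proof cases
    case (XL a j)
    obtain c d where "q = Suc (a + c)" "t = Suc (j + d)" using XL(2,3) by (metis less_iff_Suc_add)
    with XL(1) show ?thesis by (simp add: twin_label_def algebra_simps)
  next
    case (YC a)
    obtain c where "q = Suc (a + c)" using YC(2) by (metis less_iff_Suc_add)
    with YC(1) show ?thesis by (simp add: twin_label_def algebra_simps)
  next
    case (YL a j)
    obtain c where "q = Suc (a + c)" using YL(2) by (metis less_iff_Suc_add)
    with YL(1,3) show ?thesis by (simp add: twin_label_def algebra_simps)
  qed (simp_all add: twin_label_def algebra_simps)
qed

lemma inj_on_twin_edge_key: "inj_on (twin_edge_key q t) (twin_edges q t)"
  unfolding twin_edges_def inj_on_def by auto presburger+

lemma twin_label_less: "u \<in> twin_vertices q t \<Longrightarrow> twin_label q t u < 2 * q * (t + 1) + 2"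
  unfolding twin_vertices_def twin_label_def
  by (auto simp: less_iff_Suc_add algebra_simps)

lemma twin_labeling: "oriented_alpha_labeling (twin_vertices q t) (twin_edges q t) (twin_label q t) (q * (t + 1))"
proof (rule oriented_alpha_labelingI)
  show "finite (twin_vertices q t)" unfolding twin_vertices_def by simp
  show "twin_label q t u < card (twin_vertices q t)" if "u \<in> twin_vertices q t" for u
    using twin_label_less[OF that] by (simp add: card_twin_vertices)
  show "q * (t + 1) < card (twin_vertices q t)" by (simp add: card_twin_vertices)
  show "twin_edges q t \<subseteq> twin_vertices q t \<times> twin_vertices q t"
    using twin_edge_vertices by auto
  show "twin_label q t x \<le> q * (t + 1) \<and> q * (t + 1) < twin_label q t y" if "(x, y) \<in> twin_edges q t" for x y
    using twin_edge_labels[OF that] by simp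
  show "inj_on (\<lambda>(x, y). twin_label q t y - twin_label q t x) (twin_edges q t)"
  proof (rule inj_onI, clarify)
    fix x y x' y' assume e: "(x, y) \<in> twin_edges q t" and e': "(x', y') \<in> twin_edges q t"
      and eq: "twin_label q t y - twin_label q t x = twin_label q t y' - twin_label q t x'"
    have "twin_edge_key q t (x, y) = twin_edge_key q t (x', y')"
      using mult_add_eq_imp_eq[of "fst (twin_edge_key q t (x, y))" "t + 1" "snd (twin_edge_key q t (x, y))"
          "fst (twin_edge_key q t (x', y'))" "snd (twin_edge_key q t (x', y'))"]
        eq twin_edge_labels[OF e] twin_edge_labels[OF e'] by (simp add: prod_eq_iff)
    then show "x = x' \<and> y = y'" using inj_onD[OF inj_on_twin_edge_key _ e e'] by simp
  qed
qed (rule inj_on_twin_label)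

section \<open>Lobsters\<close>

lemma edge_eq_parent_edge:
  fixes p :: "'a \<Rightarrow> 'a" and rank :: "'a \<Rightarrow> nat"
  assumes G: "simple_graph V E" and card: "card E = card V - 1" and root: "root \<in> V"
    and parent: "\<And>z. z \<in> V - {root} \<Longrightarrow> {p z, z} \<in> E \<and> rank (p z) < rank z"
    and xy: "{x, y} \<in> E"
  shows "x = p y \<or> y = p x"
proof -
  have "finite V" "E \<subseteq> Pow V" using G unfolding simple_graph_def by auto
  then have fin: "finite E" by (meson finite_Pow_iff rev_finite_subset)
  text \<open>The rank rules out two vertices being each other's parent.\<close>
  have "inj_on (\<lambda>z. {p z, z}) (V - {root})"
  proof (rule inj_onI, rule ccontr)
    fix z z' assume "z \<in> V - {root}" "z' \<in> V - {root}" "{p z, z} = {p z', z'}" "z \<noteq> z'"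
    then show False using parent[of z] parent[of z'] by (auto simp: doubleton_eq_iff)
  qed
  then have "card ((\<lambda>z. {p z, z}) ` (V - {root})) = card E"
    using card root \<open>finite V\<close> by (simp add: card_image)
  then have "(\<lambda>z. {p z, z}) ` (V - {root}) = E"
    using parent fin by (intro card_subset_eq) auto
  with xy obtain z where "{x, y} = {p z, z}" by blast
  then show ?thesis by (auto simp: doubleton_eq_iff)
qed

locale lobster =
  fixes V :: "'a set" and E :: "'a set set" and r :: nat and v :: "nat \<Rightarrow> 'a" and F :: "nat \<Rightarrow> 'a set"
  assumes lobster: "lobster_description V E r v F"
begin

abbreviation nbrs :: "nat \<Rightarrow> 'a set" where "nbrs \<equiv> lobe_nbrs E v F"
abbreviation leaves :: "nat \<Rightarrow> 'a \<Rightarrow> 'a set" where "leaves \<equiv> lobe_leaves E v F"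
abbreviation branches :: "nat \<Rightarrow> 'a set" where "branches \<equiv> nonpendant E v F"

definition outer :: "nat \<Rightarrow> 'a set" where
  "outer i = F i - ({v i} \<union> nbrs i)"

lemma
  shows tree: "is_tree V E"
    and spine_edges: "\<forall>i\<in>{1..<r}. {v i, v (Suc i)} \<in> E"
    and spine_lobes: "\<forall>i\<in>{1..r}. v i \<in> F i \<and> F i \<inter> v ` {1..r} = {v i}"
    and disjoint_lobes: "\<forall>i\<in>{1..r}. \<forall>j\<in>{1..r}. i \<noteq> j \<longrightarrow> F i \<inter> F j = {}"
    and vertices_eq: "V = (\<Union>i\<in>{1..r}. F i)"
    and edges_eq: "E = {{v i, v (Suc i)} | i. 1 \<le> i \<and> i < r} \<union> (\<Union>i\<in>{1..r}. {e \<in> E. e \<subseteq> F i})"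
    and lobe_shape: "\<forall>i\<in>{1..r}.
        (\<forall>e\<in>E. e \<subseteq> F i \<longrightarrow> (\<exists>u\<in>nbrs i. e = {v i, u}) \<or> (\<exists>u\<in>nbrs i. \<exists>w\<in>outer i. e = {u, w})) \<and>
        (\<forall>w\<in>outer i. \<exists>u\<in>nbrs i. {u, w} \<in> E)"
  using lobster unfolding lobster_description_def outer_def by argo+

lemma spine_edge: "i \<in> {1..<r} \<Longrightarrow> {v i, v (Suc i)} \<in> E"
  using spine_edges by blast

lemma spine_in_lobe: "i \<in> {1..r} \<Longrightarrow> v i \<in> F i"
  using spine_lobes by blast

lemma lobes_disjoint: "i \<in> {1..r} \<Longrightarrow> j \<in> {1..r} \<Longrightarrow> i \<noteq> j \<Longrightarrow> F i \<inter> F j = {}"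
  using disjoint_lobes by blast

lemma edge_cases:
  assumes "e \<in> E"
  obtains i where "i \<in> {1..<r}" "e = {v i, v (Suc i)}" | i where "i \<in> {1..r}" "e \<subseteq> F i"
proof -
  from assms have "e \<in> {{v i, v (Suc i)} | i. 1 \<le> i \<and> i < r} \<union> (\<Union>i\<in>{1..r}. {e \<in> E. e \<subseteq> F i})"
    by (subst (asm) edges_eq)
  then show ?thesis using that by auto
qed

lemma lobe_edge:
  "i \<in> {1..r} \<Longrightarrow> e \<in> E \<Longrightarrow> e \<subseteq> F i \<Longrightarrow>
     (\<exists>u\<in>nbrs i. e = {v i, u}) \<or> (\<exists>u\<in>nbrs i. \<exists>w\<in>outer i. e = {u, w})"
  using lobe_shape by blast

lemma outer_has_nbr: "i \<in> {1..r} \<Longrightarrow> w \<in> outer i \<Longrightarrow> \<exists>u\<in>nbrs i. {u, w} \<in> E"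
  using lobe_shape by blast

lemma finite_vertices: "finite V"
  using tree unfolding is_tree_def simple_graph_def by blast

lemma lobe_subset: "i \<in> {1..r} \<Longrightarrow> F i \<subseteq> V"
  using vertices_eq by blast

lemma finite_lobe: "i \<in> {1..r} \<Longrightarrow> finite (F i)"
  using lobe_subset finite_vertices by (rule finite_subset)

lemma nbrs_subset: "nbrs i \<subseteq> F i"
  unfolding lobe_nbrs_def by blast

lemma spine_notin_nbrs: "v i \<notin> nbrs i"
  using tree unfolding lobe_nbrs_def is_tree_def simple_graph_def by fastforce

lemma leaves_subset: "leaves i u \<subseteq> F i"
  unfolding lobe_leaves_def by blast

lemma branches_subset: "branches i \<subseteq> nbrs i"
  unfolding nonpendant_def by blast

lemma outer_subset: "outer i \<subseteq> F i"
  unfolding outer_def by blast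

lemma finite_branches: "i \<in> {1..r} \<Longrightarrow> finite (branches i)"
  using finite_subset[OF subset_trans[OF branches_subset nbrs_subset] finite_lobe] .

lemma finite_leaves: "i \<in> {1..r} \<Longrightarrow> finite (leaves i u)"
  using finite_subset[OF leaves_subset finite_lobe] .

lemma finite_outer: "i \<in> {1..r} \<Longrightarrow> finite (outer i)"
  using finite_subset[OF outer_subset finite_lobe] .

lemma lobe_eq: "i \<in> {1..r} \<Longrightarrow> F i = {v i} \<union> nbrs i \<union> outer i"
  unfolding outer_def using spine_in_lobe nbrs_subset by blast

lemma first_spine_vertex: "v 1 \<in> V"
proof -
  have "r \<noteq> 0" using tree vertices_eq unfolding is_tree_def by auto
  then show ?thesis using spine_in_lobe[of 1] vertices_eq by auto
qed

definition lobe_index :: "'a \<Rightarrow> nat" where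
  "lobe_index z = (THE i. i \<in> {1..r} \<and> z \<in> F i)"

lemma lobe_index_eq: "i \<in> {1..r} \<Longrightarrow> z \<in> F i \<Longrightarrow> lobe_index z = i"
  unfolding lobe_index_def using lobes_disjoint by blast

lemma lobe_index: "z \<in> V \<Longrightarrow> lobe_index z \<in> {1..r} \<and> z \<in> F (lobe_index z)"
  using vertices_eq lobe_index_eq by fastforce

definition branch_of :: "nat \<Rightarrow> 'a \<Rightarrow> 'a" where
  "branch_of i w = (SOME u. u \<in> nbrs i \<and> {u, w} \<in> E)"

lemma branch_of: "i \<in> {1..r} \<Longrightarrow> w \<in> outer i \<Longrightarrow> branch_of i w \<in> nbrs i \<and> {branch_of i w, w} \<in> E"
  unfolding branch_of_def using outer_has_nbr by (metis (mono_tags, lifting) someI_ex)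

text \<open>Rooting the tree at v 1: a spinal vertex hangs from its predecessor, a neighbour of v i from v i,
  and an outer vertex from its chosen branch.\<close>
definition parent :: "'a \<Rightarrow> 'a" where
  "parent z = (let i = lobe_index z in
     if z = v i then v (i - 1) else if z \<in> nbrs i then v i else branch_of i z)"

definition rank :: "'a \<Rightarrow> nat" where
  "rank z = (let i = lobe_index z in if z = v i then i else if z \<in> nbrs i then r + 1 else r + 2)"

lemma parent_edge:
  assumes z: "z \<in> V - {v 1}"
  shows "{parent z, z} \<in> E \<and> rank (parent z) < rank z"
proof -
  define i where "i = lobe_index z"
  have i: "i \<in> {1..r}" "z \<in> F i" using lobe_index z i_def by auto
  consider "z = v i" | "z \<noteq> v i" "z \<in> nbrs i" | "z \<in> outer i"
    using i(2) unfolding outer_def by blast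
  then show ?thesis
  proof cases
    case 1
    with z have "i \<noteq> 1" by auto
    with i have i': "i - 1 \<in> {1..<r}" "Suc (i - 1) = i" by auto
    then have "lobe_index (v (i - 1)) = i - 1" by (intro lobe_index_eq spine_in_lobe) auto
    with 1 i' show ?thesis
      using spine_edge[OF i'(1)] unfolding parent_def rank_def i_def[symmetric] by auto
  next
    case 2
    then show ?thesis
      using i(1) lobe_index_eq[OF i(1) spine_in_lobe[OF i(1)]]
      unfolding parent_def rank_def i_def[symmetric] lobe_nbrs_def by (auto simp: insert_commute)
  next
    case 3
    have b: "branch_of i z \<in> nbrs i" "{branch_of i z, z} \<in> E" using branch_of[OF i(1) 3] by auto
    have "lobe_index (branch_of i z) = i" using lobe_index_eq[OF i(1)] b(1) nbrs_subset by blast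
    with 3 b spine_notin_nbrs[of i] show ?thesis
      unfolding parent_def rank_def i_def[symmetric] outer_def by (auto simp: Let_def)
  qed
qed

lemma branch_of_unique:
  assumes i: "i \<in> {1..r}" and u: "u \<in> nbrs i" and w: "w \<in> outer i" and e: "{u, w} \<in> E"
  shows "branch_of i w = u"
proof -
  have "u = parent w \<or> w = parent u"
    using tree first_spine_vertex parent_edge e unfolding is_tree_def by (intro edge_eq_parent_edge[where rank = rank]) auto
  moreover have "lobe_index u = i" "lobe_index w = i"
    using u w nbrs_subset outer_subset lobe_index_eq[OF i] by blast+
  then have "parent u = v i" "parent w = branch_of i w"
    using u w spine_notin_nbrs[of i] unfolding parent_def outer_def by (auto simp: Let_def)
  ultimately show ?thesis using w unfolding outer_def by auto
qed

lemma leaves_eq: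
  assumes i: "i \<in> {1..r}" and u: "u \<in> nbrs i"
  shows "leaves i u = {w \<in> outer i. branch_of i w = u}"
proof (intro equalityI subsetI)
  fix w assume w: "w \<in> leaves i u"
  then have e: "{u, w} \<in> E" and "w \<in> F i" "w \<noteq> v i" unfolding lobe_leaves_def by auto
  moreover have "u \<in> F i" using u nbrs_subset by blast
  ultimately have "w \<in> outer i"
    using lobe_edge[OF i e] u spine_notin_nbrs[of i] unfolding outer_def by (auto simp: doubleton_eq_iff)
  with branch_of_unique[OF i u _ e] show "w \<in> {w \<in> outer i. branch_of i w = u}" by simp
next
  fix w assume "w \<in> {w \<in> outer i. branch_of i w = u}"
  with branch_of[OF i] show "w \<in> leaves i u" unfolding lobe_leaves_def outer_def by auto
qed

lemma outer_in_leaves: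
  assumes "i \<in> {1..r}" "w \<in> outer i"
  shows "branch_of i w \<in> branches i" "w \<in> leaves i (branch_of i w)"
proof -
  have "branch_of i w \<in> nbrs i" using branch_of[OF assms] by blast
  with assms show "w \<in> leaves i (branch_of i w)" by (simp add: leaves_eq)
  with \<open>branch_of i w \<in> nbrs i\<close> show "branch_of i w \<in> branches i"
    unfolding nonpendant_def by blast
qed

lemma outer_eq_UN_leaves: "i \<in> {1..r} \<Longrightarrow> outer i = (\<Union>u\<in>branches i. leaves i u)"
  using outer_in_leaves leaves_eq branches_subset by fastforce

lemma card_outer:
  assumes i: "i \<in> {1..r}"
  shows "card (outer i) = (\<Sum>u\<in>branches i. card (leaves i u))"
proof -
  have "finite (branches i)" "finite (leaves i u)" for u
    using finite_branches[OF i] finite_leaves[OF i] .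
  moreover have "leaves i u \<inter> leaves i u' = {}" if "u \<in> branches i" "u' \<in> branches i" "u \<noteq> u'" for u u'
  proof -
    have "u \<in> nbrs i" "u' \<in> nbrs i" using that branches_subset by blast+
    with \<open>u \<noteq> u'\<close> show ?thesis by (auto simp: leaves_eq[OF i])
  qed
  ultimately show ?thesis unfolding outer_eq_UN_leaves[OF i] by (simp add: card_UN_disjoint)
qed

lemma lobe_edge_cases:
  assumes "i \<in> {1..r}" "e \<in> E" "e \<subseteq> F i"
  shows "(\<exists>u\<in>nbrs i. e = {v i, u}) \<or> (\<exists>u\<in>branches i. \<exists>w\<in>leaves i u. e = {u, w})"
proof -
  have "\<exists>u\<in>branches i. \<exists>w\<in>leaves i u. e = {u, w}" if "u \<in> nbrs i" "w \<in> outer i" "e = {u, w}" for u w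
    using that outer_in_leaves[OF assms(1) that(2)] branch_of_unique[OF assms(1) that(1,2)] assms(2) by auto
  then show ?thesis using lobe_edge[OF assms] by blast
qed

lemma edge_within_lobes:
  assumes e: "e \<in> E" and J: "J \<subseteq> {1..r}" and sub: "e \<subseteq> (\<Union>j\<in>J. F j)"
  shows "(\<exists>j\<in>J. e \<subseteq> F j) \<or> (\<exists>j. j \<in> J \<and> Suc j \<in> J \<and> e = {v j, v (Suc j)})"
proof -
  have index: "j \<in> J" if "j \<in> {1..r}" "x \<in> F j" "x \<in> e" for j x
    using that sub J lobes_disjoint by blast
  from e show ?thesis
  proof (cases rule: edge_cases)
    case (1 j)
    then show ?thesis using index[of j "v j"] index[of "Suc j" "v (Suc j)"] spine_in_lobe by auto
  next
    case (2 j)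
    moreover have "e \<noteq> {}" using e tree unfolding is_tree_def simple_graph_def by fastforce
    ultimately show ?thesis using index by blast
  qed
qed

lemma edge_within_prefix_split:
  assumes e: "e \<in> E" and p: "p \<le> r" and sub: "e \<subseteq> (\<Union>j\<in>{1..p}. F j)"
  shows "e \<subseteq> (\<Union>j\<in>{1..m}. F j) \<or> e \<subseteq> (\<Union>j\<in>{Suc m..p}. F j) \<or> e = {v m, v (Suc m)}"
proof -
  have "{1..p} \<subseteq> {1..r}" using p by auto
  from edge_within_lobes[OF e this sub] show ?thesis
  proof (elim disjE exE conjE bexE)
    fix j assume "j \<in> {1..p}" "e \<subseteq> F j"
    then show ?thesis by (cases "j \<le> m") auto
  next
    fix j assume j: "j \<in> {1..p}" "Suc j \<in> {1..p}" and ej: "e = {v j, v (Suc j)}"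
    have "v j \<in> F j" "v (Suc j) \<in> F (Suc j)" using j p spine_in_lobe by auto
    with j ej show ?thesis by (cases "Suc j \<le> m"; cases "j = m") auto
  qed
qed

definition lobe_core :: "nat \<Rightarrow> 'a set" where
  "lobe_core i = insert (v i) (branches i \<union> outer i)"

lemma lobe_eq_core_pendants: "i \<in> {1..r} \<Longrightarrow> F i = lobe_core i \<union> (nbrs i - branches i)"
  unfolding lobe_core_def using lobe_eq branches_subset by blast

lemma lobe_core_subset: "i \<in> {1..r} \<Longrightarrow> lobe_core i \<subseteq> F i"
  using lobe_eq_core_pendants by blast

lemma lobe_core_disjoint_pendants: "lobe_core i \<inter> (nbrs i - branches i) = {}"
  unfolding lobe_core_def outer_def using spine_notin_nbrs by blast

lemma finite_pendants: "i \<in> {1..r} \<Longrightarrow> finite (nbrs i - branches i)"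
  using finite_subset[OF nbrs_subset finite_lobe] by blast

lemma card_lobe_core:
  assumes i: "i \<in> {1..r}"
  shows "card (lobe_core i) = card (branches i) + card (outer i) + 1"
proof -
  have "finite (branches i)" "finite (outer i)"
    using finite_branches[OF i] finite_outer[OF i] .
  moreover have "branches i \<inter> outer i = {}" "v i \<notin> branches i \<union> outer i"
    using branches_subset spine_notin_nbrs unfolding outer_def by blast+
  ultimately show ?thesis unfolding lobe_core_def by (simp add: card_Un_disjoint)
qed

lemma lobe_enumeration:
  assumes i: "i \<in> {1..r}" and t: "\<forall>u\<in>branches i. card (leaves i u) = t"
  obtains c l where "bij_betw c {..<card (branches i)} (branches i)"
    and "\<And>u. u \<in> branches i \<Longrightarrow> bij_betw (l u) {..<t} (leaves i u)"
proof -
  note fin = finite_branches[OF i] finite_leaves[OF i]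
  obtain c where "bij_betw c {..<card (branches i)} (branches i)"
    using ex_bij_betw_nat_finite[OF fin(1)] by (auto simp: atLeast0LessThan)
  moreover have "\<forall>u\<in>branches i. \<exists>h. bij_betw h {..<t} (leaves i u)"
    using ex_bij_betw_nat_finite[OF fin(2)] t by (auto simp: atLeast0LessThan)
  then obtain l where "\<forall>u\<in>branches i. bij_betw (l u) {..<t} (leaves i u)" by (metis bchoice)
  ultimately show ?thesis using that by blast
qed

lemma lobe_core_enumerated:
  assumes j: "j \<in> {1..r}" and c: "bij_betw c {..<q} (branches j)"
    and l: "\<And>u. u \<in> branches j \<Longrightarrow> bij_betw (l u) {..<t} (leaves j u)"
  shows "lobe_core j = insert (v j) (c ` {..<q} \<union> (\<lambda>(a, b). l (c a) b) ` ({..<q} \<times> {..<t}))"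
proof -
  have branches: "branches j = c ` {..<q}" using bij_betw_imp_surj_on[OF c] by simp
  then have "outer j = (\<Union>a<q. leaves j (c a))" by (simp add: outer_eq_UN_leaves[OF j] image_image)
  also have "\<dots> = (\<Union>a<q. l (c a) ` {..<t})"
    using bij_betw_imp_surj_on[OF l] bij_betwE[OF c] by (intro SUP_cong) auto
  also have "\<dots> = (\<lambda>(a, b). l (c a) b) ` ({..<q} \<times> {..<t})"
    by auto
  finally show ?thesis
    unfolding lobe_core_def branches by simp
qed

end

section \<open>Labeling a balanced pair of lobes\<close>

locale lobe_pair = lobster +
  fixes i q t :: nat and cx cy :: "nat \<Rightarrow> 'a" and lx ly :: "'a \<Rightarrow> nat \<Rightarrow> 'a"
  assumes pair: "i \<in> {1..<r}"
    and cx: "bij_betw cx {..<q} (branches i)"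
    and lx: "\<And>u. u \<in> branches i \<Longrightarrow> bij_betw (lx u) {..<t} (leaves i u)"
    and cy: "bij_betw cy {..<q} (branches (Suc i))"
    and ly: "\<And>u. u \<in> branches (Suc i) \<Longrightarrow> bij_betw (ly u) {..<t} (leaves (Suc i) u)"
begin

primrec embed :: "twin_vertex \<Rightarrow> 'a" where
  "embed X = v i"
| "embed Y = v (Suc i)"
| "embed (XC a) = cx a"
| "embed (XL a j) = lx (cx a) j"
| "embed (YC a) = cy a"
| "embed (YL a j) = ly (cy a) j"

lemma pair_lobes: "i \<in> {1..r}" "Suc i \<in> {1..r}" "F i \<inter> F (Suc i) = {}"
  using pair lobes_disjoint[of i "Suc i"] by auto

lemma embed_image: "embed ` twin_vertices q t = lobe_core i \<union> lobe_core (Suc i)"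
proof -
  have "embed ` twin_vertices q t
    = insert (v i) (cx ` {..<q} \<union> (\<lambda>(a, b). lx (cx a) b) ` ({..<q} \<times> {..<t}))
      \<union> insert (v (Suc i)) (cy ` {..<q} \<union> (\<lambda>(a, b). ly (cy a) b) ` ({..<q} \<times> {..<t}))"
    unfolding twin_vertices_def by (auto simp: image_Un image_image split_beta)
  then show ?thesis
    using lobe_core_enumerated[OF pair_lobes(1) cx lx] lobe_core_enumerated[OF pair_lobes(2) cy ly] by simp
qed

lemma card_pair_core: "card (lobe_core i \<union> lobe_core (Suc i)) = 2 * q * (t + 1) + 2"
proof -
  have card: "card (lobe_core j) = q * (t + 1) + 1"
    if j: "j \<in> {1..r}" and c: "bij_betw c {..<q} (branches j)"
      and l: "\<And>u. u \<in> branches j \<Longrightarrow> bij_betw (l u) {..<t} (leaves j u)" for j c and l :: "'a \<Rightarrow> nat \<Rightarrow> 'a"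
  proof -
    have "card (branches j) = q" using bij_betw_same_card[OF c] by simp
    moreover have "card (outer j) = (\<Sum>u\<in>branches j. t)"
      unfolding card_outer[OF j] using bij_betw_same_card[OF l] by (intro sum.cong) auto
    ultimately show ?thesis using card_lobe_core[OF j] by (simp add: algebra_simps)
  qed
  moreover have "lobe_core i \<inter> lobe_core (Suc i) = {}"
    using pair_lobes lobe_eq_core_pendants by blast
  moreover have "finite (lobe_core j)" if "j \<in> {1..r}" for j
    using finite_subset[OF _ finite_lobe[OF that]] lobe_eq_core_pendants[OF that] by blast
  ultimately show ?thesis
    using pair_lobes card[OF pair_lobes(1) cx lx] card[OF pair_lobes(2) cy ly] by (simp add: card_Un_disjoint)
qed

lemma inj_on_embed: "inj_on embed (twin_vertices q t)"
proof (rule eq_card_imp_inj_on)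
  show "finite (twin_vertices q t)" unfolding twin_vertices_def by simp
  show "card (embed ` twin_vertices q t) = card (twin_vertices q t)"
    unfolding embed_image card_pair_core card_twin_vertices ..
qed

definition core_edges :: "('a \<times> 'a) set" where
  "core_edges = map_prod embed embed ` twin_edges q t"

definition core_label :: "'a \<Rightarrow> nat" where
  "core_label = twin_label q t \<circ> the_inv_into (twin_vertices q t) embed"

lemma core_labeling:
  "oriented_alpha_labeling (lobe_core i \<union> lobe_core (Suc i)) core_edges core_label (q * (t + 1))"
  using oriented_alpha_labeling_image[OF twin_labeling inj_on_embed]
  unfolding embed_image core_edges_def core_label_def .

lemma core_label_spine: "core_label (v i) = 0" "core_label (v (Suc i)) = q * (t + 1) + 1"
proof -
  have "X \<in> twin_vertices q t" "Y \<in> twin_vertices q t" unfolding twin_vertices_def by auto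
  then show "core_label (v i) = 0" "core_label (v (Suc i)) = q * (t + 1) + 1"
    using the_inv_into_f_f[OF inj_on_embed] unfolding core_label_def
    by (force simp: twin_label_def)+
qed

lemma undirected_core_edgesI: "(x, y) \<in> twin_edges q t \<Longrightarrow> {embed x, embed y} \<in> undirected core_edges"
  unfolding undirected_def core_edges_def by force

lemma core_edges_cover:
  assumes j: "j \<in> {i, Suc i}" and u: "u \<in> branches j"
  shows "{v j, u} \<in> undirected core_edges" "w \<in> leaves j u \<Longrightarrow> {u, w} \<in> undirected core_edges"
proof -
  have "{v j, u} \<in> undirected core_edges \<and> (w \<in> leaves j u \<longrightarrow> {u, w} \<in> undirected core_edges)"
  proof (cases "j = i")
    case True
    with u cx obtain a where a: "a < q" "u = cx a" by (auto simp: bij_betw_def)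
    have "{v i, cx a} \<in> undirected core_edges"
      using undirected_core_edgesI[of X "XC a"] a unfolding twin_edges_def by auto
    moreover have "{cx a, w} \<in> undirected core_edges" if w: "w \<in> leaves i (cx a)"
    proof -
      obtain b where b: "b < t" "w = lx (cx a) b" using w lx u a True by (auto simp: bij_betw_def)
      then have "(XL a b, XC a) \<in> twin_edges q t" using a unfolding twin_edges_def by force
      with b show ?thesis using undirected_core_edgesI by (force simp: insert_commute)
    qed
    ultimately show ?thesis using True a by simp
  next
    case False
    with j have j: "j = Suc i" by simp
    with u cy obtain a where a: "a < q" "u = cy a" by (auto simp: bij_betw_def)
    have "{v (Suc i), cy a} \<in> undirected core_edges"
      using undirected_core_edgesI[of "YC a" Y] a unfolding twin_edges_def by (auto simp: insert_commute)
    moreover have "{cy a, w} \<in> undirected core_edges" if w: "w \<in> leaves (Suc i) (cy a)"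
    proof -
      obtain b where b: "b < t" "w = ly (cy a) b" using w ly u a j by (auto simp: bij_betw_def)
      then have "(YC a, YL a b) \<in> twin_edges q t" using a unfolding twin_edges_def by force
      with b show ?thesis using undirected_core_edgesI by force
    qed
    ultimately show ?thesis using j a by simp
  qed
  then show "{v j, u} \<in> undirected core_edges" "w \<in> leaves j u \<Longrightarrow> {u, w} \<in> undirected core_edges"
    by simp_all
qed

lemma spine_core_edge: "{v i, v (Suc i)} \<in> undirected core_edges"
  using undirected_core_edgesI[of X Y] unfolding twin_edges_def by simp

lemma pair_edges_covered:
  "{e \<in> E. e \<subseteq> F i \<union> F (Suc i)}
     \<subseteq> undirected (core_edges \<union> (\<lambda>z. (z, v (Suc i))) ` (nbrs (Suc i) - branches (Suc i))
                     \<union> Pair (v i) ` (nbrs i - branches i))"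
proof clarify
  fix e assume e: "e \<in> E" "e \<subseteq> F i \<union> F (Suc i)"
  let ?U = "undirected (core_edges \<union> (\<lambda>z. (z, v (Suc i))) ` (nbrs (Suc i) - branches (Suc i))
                     \<union> Pair (v i) ` (nbrs i - branches i))"
  have core: "undirected core_edges \<subseteq> ?U" unfolding undirected_def by blast
  have pendant: "{v j, u} \<in> ?U" if "j \<in> {i, Suc i}" "u \<in> nbrs j - branches j" for j u
    using that unfolding undirected_def by (force simp: insert_commute)
  have in_lobe: "e \<in> ?U" if j: "j \<in> {i, Suc i}" and sub: "e \<subseteq> F j" for j
  proof -
    have "j \<in> {1..r}" using j pair_lobes by blast
    from lobe_edge_cases[OF this e(1) sub] show ?thesis
      using core_edges_cover[OF j] core pendant[OF j] by blast
  qed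
  have "{i, Suc i} \<subseteq> {1..r}" "e \<subseteq> (\<Union>j\<in>{i, Suc i}. F j)" using pair_lobes e(2) by auto
  from edge_within_lobes[OF e(1) this] show "e \<in> ?U"
    using in_lobe spine_core_edge core by auto
qed

lemma pair_labeling:
  "\<exists>P f k. oriented_alpha_labeling (F i \<union> F (Suc i)) P f k \<and> f (v i) = 0 \<and> f (v (Suc i)) = k + 1 \<and>
     {e \<in> E. e \<subseteq> F i \<union> F (Suc i)} \<subseteq> undirected P"
proof -
  let ?C = "lobe_core i \<union> lobe_core (Suc i)"
    and ?S = "nbrs (Suc i) - branches (Suc i)" and ?S' = "nbrs i - branches i"
  have fin: "finite ?S" "finite ?S'" using finite_pendants pair_lobes by blast+
  have disj: "?S \<inter> ?C = {}" "?S' \<inter> (?C \<union> ?S) = {}"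
    using pair_lobes(3) lobe_core_subset[OF pair_lobes(1)] lobe_core_subset[OF pair_lobes(2)]
      lobe_core_disjoint_pendants[of i] lobe_core_disjoint_pendants[of "Suc i"] nbrs_subset[of i]
      nbrs_subset[of "Suc i"] by blast+
  have spine: "v i \<in> ?C" "v (Suc i) \<in> ?C" unfolding lobe_core_def by blast+
  obtain g k where g: "oriented_alpha_labeling (?C \<union> ?S) (core_edges \<union> (\<lambda>z. (z, v (Suc i))) ` ?S) g k"
    "g (v (Suc i)) = k + 1" "g (v i) = 0"
    using oriented_alpha_labeling_add_leaves_at_threshold[OF fin(1) core_labeling spine(2) core_label_spine(2) disj(1)]
      core_label_spine(1) spine(1) by (metis (no_types, lifting) le0)
  obtain h where h: "oriented_alpha_labeling (?C \<union> ?S \<union> ?S')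
      (core_edges \<union> (\<lambda>z. (z, v (Suc i))) ` ?S \<union> Pair (v i) ` ?S') h k" "\<forall>x\<in>?C \<union> ?S. h x = g x"
    using oriented_alpha_labeling_add_leaves_at_bottom[OF fin(2) g(1) _ g(3) disj(2)] spine(1) by blast
  have V: "?C \<union> ?S \<union> ?S' = F i \<union> F (Suc i)"
    using lobe_eq_core_pendants[OF pair_lobes(1)] lobe_eq_core_pendants[OF pair_lobes(2)] by blast
  have "h (v i) = 0" "h (v (Suc i)) = k + 1" using h(2) g(2,3) spine by auto
  with h(1)[unfolded V] pair_edges_covered show ?thesis by blast
qed

end

section \<open>Joining the pairs along the spine\<close>

context lobster
begin

lemma lobe_pair_labeling:
  assumes i: "i \<in> {1..<r}" and q: "card (branches i) = q" "card (branches (Suc i)) = q"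
    and t: "\<forall>u\<in>branches i. card (leaves i u) = t" "\<forall>u\<in>branches (Suc i). card (leaves (Suc i) u) = t"
  shows "\<exists>P f k. oriented_alpha_labeling (F i \<union> F (Suc i)) P f k \<and> f (v i) = 0 \<and> f (v (Suc i)) = k + 1 \<and>
     {e \<in> E. e \<subseteq> F i \<union> F (Suc i)} \<subseteq> undirected P"
proof -
  have "i \<in> {1..r}" "Suc i \<in> {1..r}" using i by auto
  obtain cx lx cy ly where "bij_betw cx {..<q} (branches i)"
    "\<And>u. u \<in> branches i \<Longrightarrow> bij_betw (lx u) {..<t} (leaves i u)"
    "bij_betw cy {..<q} (branches (Suc i))"
    "\<And>u. u \<in> branches (Suc i) \<Longrightarrow> bij_betw (ly u) {..<t} (leaves (Suc i) u)"
    using lobe_enumeration[OF \<open>i \<in> {1..r}\<close> t(1)] lobe_enumeration[OF \<open>Suc i \<in> {1..r}\<close> t(2)] q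
    by metis
  then interpret lobe_pair V E r v F i q t cx cy lx ly
    using i by unfold_locales
  show ?thesis by (rule pair_labeling)
qed

lemma balanced_pair_labeling:
  assumes "pairwise_trivially_balanced E r v F" "i \<in> {1..<r}" "odd i"
  shows "\<exists>P f k. oriented_alpha_labeling (F i \<union> F (Suc i)) P f k \<and> f (v i) = 0 \<and> f (v (Suc i)) = k + 1 \<and>
     {e \<in> E. e \<subseteq> F i \<union> F (Suc i)} \<subseteq> undirected P"
  using assms lobe_pair_labeling unfolding pairwise_trivially_balanced_def by meson

lemma prefix_labeling:
  assumes bal: "pairwise_trivially_balanced E r v F" and n: "1 \<le> n" "2 * n \<le> r"
  shows "\<exists>P f k. oriented_alpha_labeling (\<Union>j\<in>{1..2 * n}. F j) P f k \<and> f (v (2 * n)) = k + 1 \<and>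
     {e \<in> E. e \<subseteq> (\<Union>j\<in>{1..2 * n}. F j)} \<subseteq> undirected P"
  using n
proof (induction n rule: nat_induct_at_least)
  case base
  have "{1..2 * 1} = {1, Suc 1 :: nat}" by auto
  then have "(\<Union>j\<in>{1..2 * 1}. F j) = F 1 \<union> F (Suc 1)" by simp
  then show ?case using balanced_pair_labeling[OF bal, of 1] base by (auto simp: numeral_2_eq_2)
next
  case (Suc n)
  let ?A = "\<Union>j\<in>{1..2 * n}. F j" and ?i = "Suc (2 * n)"
  obtain P1 f1 k1 where L1: "oriented_alpha_labeling ?A P1 f1 k1" "f1 (v (2 * n)) = k1 + 1"
    "{e \<in> E. e \<subseteq> ?A} \<subseteq> undirected P1"
    using Suc by auto
  have i: "?i \<in> {1..<r}" "odd ?i" using Suc by auto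
  obtain P2 f2 k2 where L2: "oriented_alpha_labeling (F ?i \<union> F (Suc ?i)) P2 f2 k2" "f2 (v ?i) = 0"
    "f2 (v (Suc ?i)) = k2 + 1" "{e \<in> E. e \<subseteq> F ?i \<union> F (Suc ?i)} \<subseteq> undirected P2"
    using balanced_pair_labeling[OF bal i] by blast
  have lobes: "2 * n \<in> {1..r}" "?i \<in> {1..r}" "Suc ?i \<in> {1..r}" using Suc.hyps Suc.prems by auto
  have "F j \<inter> (F ?i \<union> F (Suc ?i)) = {}" if "j \<in> {1..2 * n}" for j
    using lobes_disjoint[of j ?i] lobes_disjoint[of j "Suc ?i"] that lobes by auto
  then have disj: "?A \<inter> (F ?i \<union> F (Suc ?i)) = {}" by blast
  have ends: "v (2 * n) \<in> ?A" "v ?i \<in> F ?i \<union> F (Suc ?i)" "v (Suc ?i) \<in> F ?i \<union> F (Suc ?i)"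
    using spine_in_lobe[OF lobes(1)] spine_in_lobe[OF lobes(2)] spine_in_lobe[OF lobes(3)] Suc.hyps
    by (auto intro!: UN_I[of "2 * n"])
  have indices: "{1..2 * Suc n} = {1..2 * n} \<union> {?i, Suc ?i}" using Suc.hyps by auto
  then have union: "?A \<union> (F ?i \<union> F (Suc ?i)) = (\<Union>j\<in>{1..2 * Suc n}. F j)" by auto
  let ?g = "joined_label f1 k1 f2 (F ?i \<union> F (Suc ?i))"
  have L: "oriented_alpha_labeling (\<Union>j\<in>{1..2 * Suc n}. F j) (insert (v ?i, v (2 * n)) (P1 \<union> P2)) ?g (k1 + k2 + 1)"
    using oriented_alpha_labeling_join[OF L1(1) ends(1) L1(2) L2(1) ends(2) L2(2) disj] unfolding union .
  have top: "?g (v (2 * Suc n)) = k1 + k2 + 1 + 1" using ends(3) L2(3) by (simp add: joined_label_def)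
  have pair: "(\<Union>j\<in>{Suc (2 * n)..2 * Suc n}. F j) = F ?i \<union> F (Suc ?i)"
    by (auto simp: atLeastAtMostSuc_conv)
  have cover: "e \<in> insert {v ?i, v (2 * n)} (undirected P1 \<union> undirected P2)"
    if e: "e \<in> E" "e \<subseteq> (\<Union>j\<in>{1..2 * Suc n}. F j)" for e
    using edge_within_prefix_split[OF e(1) _ e(2), of "2 * n"] Suc.prems L1(3) L2(4) e(1)
    unfolding pair by (auto simp: insert_commute)
  then have "{e \<in> E. e \<subseteq> (\<Union>j\<in>{1..2 * Suc n}. F j)} \<subseteq> undirected (insert (v ?i, v (2 * n)) (P1 \<union> P2))"
    by auto
  with L top show ?case by blast
qed

lemma complete_alpha_labeling_exists:
  assumes bal: "pairwise_trivially_balanced E r v F"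
  shows "\<exists>f k. complete_alpha_labeling V E f k"
proof -
  have "even r" using bal unfolding pairwise_trivially_balanced_def by blast
  moreover have "r \<noteq> 0" using tree vertices_eq unfolding is_tree_def by auto
  ultimately have n: "1 \<le> r div 2" "2 * (r div 2) = r" by auto
  then obtain P f k where L: "oriented_alpha_labeling V P f k" and cover: "{e \<in> E. e \<subseteq> V} \<subseteq> undirected P"
    using prefix_labeling[OF bal n(1)] vertices_eq by auto
  have "E \<subseteq> undirected P" using cover tree unfolding is_tree_def simple_graph_def by blast
  moreover have "card E + 1 = card V"
    using tree finite_vertices unfolding is_tree_def by (simp add: card_gt_0_iff)
  ultimately show ?thesis using complete_alpha_labeling_if_oriented[OF L] by blast
qed

end

theorem corollary4p14:
  fixes V :: "'a set" and E :: "'a set set" and r :: nat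
    and v :: "nat \<Rightarrow> 'a" and F :: "nat \<Rightarrow> 'a set"
  assumes "lobster_description V E r v F"
    and "pairwise_trivially_balanced E r v F"
  shows "\<exists>f k. complete_alpha_labeling V E f k"
proof -
  interpret lobster V E r v F using assms(1) by unfold_locales
  show ?thesis using complete_alpha_labeling_exists[OF assms(2)] .
qed

end
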